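(* Let $\phi_*\in(0,\pi/2)$, $R\ge r=1$, and consider the billiard map on $Q(\phi_*,R)$. For $x\in M_r$ with $n_1=0$, writing $\tau_0=|p(x_0)p(x_1)|$ and $\tau_1=|p(x_1)p(x_2)|$, one has $\tau_0+\tau_1>2d_0$, $\tau_0+\tau_1>2d_2$, and hence $\tau_0+\tau_1>d_0+d_2$.
   Context: Setting: $r=1$, $Q(\phi_*,R)=D(O_r,r)\cap D(O_R,R)$ with $|O_rO_R|=\sqrt{R^2-r^2\sin^2\phi_*}-r\cos\phi_*$; its boundary consists of $\Gamma_r$ (the major arc of $\partial D(O_r,r)$ with position angles $[\phi_*,2\pi-\phi_*]$) and $\Gamma_R\subset\partial D(O_R,R)$. Phase space $M=M_r\sqcup M_R$, coordinates $(\phi,\theta)$ with $\theta\in(0,\pi)$ the angle from the positive tangent direction; $p(x)$ the base point; $F$ the billiard map. $M_r^{out}=M_r\cap F^{-1}(M_R)$, $M_R^{out}=M_R\cap F^{-1}(M_r)$. For $x\in M_r$: $x_0=F^{n_0}x$ with $n_0=\inf\{n\ge0:F^nx\in M_r^{out}\}$, $x_1=Fx_0$, $n_1=\inf\{n\ge0:F^nx_1\in M_R^{out}\}$, $x_2=F^{n_1+1}x_1$; $d_0=r\sin\theta(x_0)$, $d_2=r\sin\theta(x_2)$. *)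

theory Defs
  imports "HOL-Analysis.Analysis"
begin

(* Plane = complex numbers.  r = 1, O_r = 0.  Parameters: phs = phi_*, R. *)

text \<open>Centre of the big disc: on the real axis at distance
  sqrt(R^2 - sin^2 phi_*) - cos phi_* from O_r = 0, on the side opposite to the
  cap, so that the two circles meet at the points cis(+-phi_*).\<close>
definition O_R :: "real \<Rightarrow> real \<Rightarrow> complex" where
  "O_R phs R = complex_of_real (- (sqrt (R\<^sup>2 - (sin phs)\<^sup>2) - cos phs))"

definition Qset :: "real \<Rightarrow> real \<Rightarrow> complex set" where
  "Qset phs R = {z. cmod z \<le> 1 \<and> cmod (z - O_R phs R) \<le> R}"

definition ang2pi :: "complex \<Rightarrow> real" where
  "ang2pi z = (if Arg z < 0 then Arg z + 2 * pi else Arg z)"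

definition Gamma_r :: "real \<Rightarrow> complex set" where
  "Gamma_r phs = {z. cmod z = 1 \<and> phs \<le> ang2pi z \<and> ang2pi z \<le> 2 * pi - phs}"

text \<open>Half opening angle of Gamma_R seen from O_R (position angle of the corner cis phi_*).\<close>
definition psistar :: "real \<Rightarrow> real \<Rightarrow> real" where
  "psistar phs R = Arg ((cis phs - O_R phs R) / complex_of_real R)"

datatype side = Sr | SR

text \<open>Phase point: (component, position angle on the respective circle, theta).
  On M_r the position angle is phi (around O_r); on M_R it is the position angle
  psi around O_R.  theta in (0,pi) is the angle from the positive (counterclockwise)
  tangent direction to the outgoing velocity.\<close>
type_synonym bstate = "side \<times> real \<times> real"

definition Mr :: "real \<Rightarrow> bstate set" where
  "Mr phs = {(s, \<phi>, \<theta>). s = Sr \<and> phs \<le> \<phi> \<and> \<phi> \<le> 2 * pi - phs \<and> 0 < \<theta> \<and> \<theta> < pi}"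

definition MR :: "real \<Rightarrow> real \<Rightarrow> bstate set" where
  "MR phs R = {(s, \<psi>, \<theta>). s = SR \<and> - psistar phs R < \<psi> \<and> \<psi> < psistar phs R \<and> 0 < \<theta> \<and> \<theta> < pi}"

definition base :: "real \<Rightarrow> real \<Rightarrow> bstate \<Rightarrow> complex" where
  "base phs R x = (case x of (Sr, \<phi>, \<theta>) \<Rightarrow> cis \<phi>
                          | (SR, \<psi>, \<theta>) \<Rightarrow> O_R phs R + complex_of_real R * cis \<psi>)"

definition vel :: "bstate \<Rightarrow> complex" where
  "vel x = \<i> * cis (fst (snd x)) * cis (snd (snd x))"

definition bmap :: "real \<Rightarrow> real \<Rightarrow> bstate \<Rightarrow> bstate" where
  "bmap phs R x =
    (let q = base phs R x; v = vel x;
         t = Sup {t. 0 \<le> t \<and> q + complex_of_real t * v \<in> Qset phs R};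
         q' = q + complex_of_real t * v
     in if q' \<in> Gamma_r phs then
          (let n = q'; v' = v - complex_of_real (2 * (v \<bullet> n)) * n
           in (Sr, ang2pi q', Arg (v' / (\<i> * n))))
        else
          (let n = (q' - O_R phs R) / complex_of_real R;
               v' = v - complex_of_real (2 * (v \<bullet> n)) * n
           in (SR, Arg n, Arg (v' / (\<i> * n)))))"

definition Mr_out :: "real \<Rightarrow> real \<Rightarrow> bstate set" where
  "Mr_out phs R = {x \<in> Mr phs. bmap phs R x \<in> MR phs R}"

definition MR_out :: "real \<Rightarrow> real \<Rightarrow> bstate set" where
  "MR_out phs R = {x \<in> MR phs R. bmap phs R x \<in> Mr phs}"

definition theta :: "bstate \<Rightarrow> real" where
  "theta x = snd (snd x)"

end

theory Submission
  imports Defs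
begin

text \<open>Write \<open>p\<^sub>0, p\<^sub>1, p\<^sub>2\<close> for the base points of \<open>x\<^sub>0, x\<^sub>1, x\<^sub>2\<close>, \<open>v\<close> for the velocity
  of \<open>x\<^sub>0\<close> and \<open>n\<close> for the outer normal of \<open>\<Gamma>\<^sub>R\<close> at \<open>p\<^sub>1\<close>. Then \<open>d\<^sub>0 = - p\<^sub>0 \<bullet> v\<close>, and the
  condition \<open>|p\<^sub>2| = 1\<close> expands to
  \<open>(\<tau>\<^sub>0 + \<tau>\<^sub>1) (\<tau>\<^sub>0 + \<tau>\<^sub>1 - 2 d\<^sub>0) = 4 \<tau>\<^sub>1 (v \<bullet> n) (p\<^sub>1 \<bullet> n)\<close>.
  Both factors on the right are positive: \<open>v \<bullet> n = sin \<theta>(x\<^sub>1) > 0\<close>,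
  and \<open>p\<^sub>1 \<bullet> n \<ge> R - |O\<^sub>r O\<^sub>R| > 0\<close>. Hence \<open>\<tau>\<^sub>0 + \<tau>\<^sub>1 > 2 d\<^sub>0\<close>; the reversed path
  \<open>p\<^sub>2 \<rightarrow> p\<^sub>1 \<rightarrow> p\<^sub>0\<close> is of the same kind and gives \<open>\<tau>\<^sub>0 + \<tau>\<^sub>1 > 2 d\<^sub>2\<close>.\<close>

definition reflect :: "'a::real_inner \<Rightarrow> 'a \<Rightarrow> 'a" where
  "reflect n v = v - (2 * (v \<bullet> n)) *\<^sub>R n"

lemma reflect_inner_normal: "norm n = 1 \<Longrightarrow> reflect n v \<bullet> n = - (v \<bullet> n)"
  by (simp add: reflect_def inner_diff_left power2_norm_eq_inner[symmetric])

lemma norm_reflect: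
  assumes "norm n = 1" shows "norm (reflect n v) = norm v"
proof -
  have "n \<bullet> n = 1" using assms by (simp add: dot_square_norm)
  then have "reflect n v \<bullet> reflect n v = v \<bullet> v"
    by (simp add: reflect_def inner_diff_left inner_diff_right inner_commute[of n v] algebra_simps)
  then show ?thesis unfolding norm_eq_sqrt_inner by simp
qed

lemma reflect_reflect:
  assumes "norm n = 1" shows "reflect n (reflect n v) = v"
proof -
  have "n \<bullet> n = 1" using assms by (simp add: power2_norm_eq_inner[symmetric])
  then show ?thesis by (simp add: reflect_def inner_diff_left algebra_simps scaleR_2)
qed

lemma reflect_minus: "reflect n (- v) = - reflect n v"
  by (simp add: reflect_def)

lemma return_path_length_gt:
  fixes p v n :: "'a::real_inner"
  assumes "norm p = 1" "norm v = 1" "norm n = 1" "0 \<le> t" "0 < s"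
    and "v \<bullet> n > 0" "(p + t *\<^sub>R v) \<bullet> n > 0"
    and "norm (p + t *\<^sub>R v + s *\<^sub>R reflect n v) = 1"
  shows "t + s > - 2 * (p \<bullet> v)"
proof -
  define p1 where "p1 = p + t *\<^sub>R v"
  define w where "w = reflect n v"
  have unit: "p \<bullet> p = 1" "v \<bullet> v = 1" "n \<bullet> n = 1" "w \<bullet> w = 1"
    using assms(1-3) norm_reflect[OF assms(3), of v]
    by (simp_all add: w_def power2_norm_eq_inner[symmetric])
  have p1p1: "p1 \<bullet> p1 = 1 + 2 * t * (p \<bullet> v) + t\<^sup>2"
    using unit by (simp add: p1_def inner_add_left inner_add_right inner_commute[of v p]
        power2_eq_square algebra_simps)
  have p1w: "p1 \<bullet> w = t + p \<bullet> v - 2 * (v \<bullet> n) * (p1 \<bullet> n)"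
    using unit by (simp add: w_def reflect_def p1_def inner_diff_right inner_add_left)
  have "(p1 + s *\<^sub>R w) \<bullet> (p1 + s *\<^sub>R w) = 1"
    using assms(8) unfolding dot_square_norm p1_def w_def by simp
  then have "1 = p1 \<bullet> p1 + 2 * s * (p1 \<bullet> w) + s\<^sup>2 * (w \<bullet> w)"
    by (simp add: inner_add_left inner_add_right inner_commute[of w p1] power2_eq_square algebra_simps)
  also have "\<dots> = 1 + 2 * t * (p \<bullet> v) + t\<^sup>2 + 2 * s * (t + p \<bullet> v - 2 * (v \<bullet> n) * (p1 \<bullet> n)) + s\<^sup>2"
    by (simp only: p1p1 p1w unit mult_1_right)
  finally have "(t + s) * (t + s + 2 * (p \<bullet> v)) = 4 * s * ((v \<bullet> n) * (p1 \<bullet> n))"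
    by (simp add: power2_eq_square algebra_simps)
  moreover have "(v \<bullet> n) * (p1 \<bullet> n) > 0" using assms(6,7) by (simp add: p1_def)
  ultimately have "(t + s) * (t + s + 2 * (p \<bullet> v)) > 0" using assms(5) by simp
  then show ?thesis using assms(4,5) by (simp add: zero_less_mult_iff)
qed

lemma ray_exit:
  fixes q v a b :: "'a::real_normed_vector" and r \<rho> :: real
  defines "K \<equiv> cball a r \<inter> cball b \<rho>"
  defines "t \<equiv> Sup {t. 0 \<le> t \<and> q + t *\<^sub>R v \<in> K}"
  assumes "q \<in> K" "v \<noteq> 0"
  shows "0 \<le> t" "q + t *\<^sub>R v \<in> K" "dist a (q + t *\<^sub>R v) = r \<or> dist b (q + t *\<^sub>R v) = \<rho>"
proof -
  define S where "S = {t. 0 \<le> t \<and> q + t *\<^sub>R v \<in> K}"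
  have "0 \<in> S" using assms(3) by (simp add: S_def)
  moreover have bdd: "bdd_above S"
  proof (rule bdd_aboveI[of _ "2 * r / norm v"])
    fix s assume "s \<in> S"
    then have "0 \<le> s" "dist a q \<le> r" "dist a (q + s *\<^sub>R v) \<le> r"
      using assms(3) by (auto simp: S_def K_def)
    moreover have "norm (s *\<^sub>R v) \<le> dist a q + dist a (q + s *\<^sub>R v)"
      using dist_triangle[of q "q + s *\<^sub>R v" a] by (simp add: dist_commute dist_norm)
    ultimately show "s \<le> 2 * r / norm v"
      using assms(4) by (simp add: field_simps dist_commute)
  qed
  moreover have "closed S"
    unfolding S_def K_def Int_iff mem_cball
    by (intro closed_Collect_conj closed_Collect_le) (auto intro!: continuous_intros)
  ultimately have tS: "t \<in> S" unfolding t_def S_def[symmetric] by (blast intro: closed_contains_Sup)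
  then show "0 \<le> t" "q + t *\<^sub>R v \<in> K" by (auto simp: S_def)
  show "dist a (q + t *\<^sub>R v) = r \<or> dist b (q + t *\<^sub>R v) = \<rho>"
  proof (rule ccontr)
    assume "\<not> ?thesis"
    with tS have inside: "dist a (q + t *\<^sub>R v) < r" "dist b (q + t *\<^sub>R v) < \<rho>"
      by (auto simp: S_def K_def)
    define e where "e = min (r - dist a (q + t *\<^sub>R v)) (\<rho> - dist b (q + t *\<^sub>R v)) / (2 * norm v)"
    have e: "0 < e" "e * norm v < r - dist a (q + t *\<^sub>R v)" "e * norm v < \<rho> - dist b (q + t *\<^sub>R v)"
      using inside assms(4) by (auto simp: e_def field_simps)
    have "dist c (q + (t + e) *\<^sub>R v) \<le> dist c (q + t *\<^sub>R v) + e * norm v" for c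
      using dist_triangle[of c "q + (t + e) *\<^sub>R v" "q + t *\<^sub>R v"] e(1)
      by (simp add: dist_norm algebra_simps)
    then have "t + e \<in> S"
      using e tS by (fastforce simp: S_def K_def intro: order_trans)
    then have "t + e \<le> t" unfolding t_def S_def[symmetric] using bdd by (rule cSup_upper)
    then show False using e(1) by simp
  qed
qed

definition centre_distance :: "real \<Rightarrow> real \<Rightarrow> real" where
  "centre_distance phs R = sqrt (R\<^sup>2 - (sin phs)\<^sup>2) - cos phs"

lemma O_R_eq: "O_R phs R = - complex_of_real (centre_distance phs R)"
  by (simp add: O_R_def centre_distance_def)

lemma centre_distance_properties:
  assumes "0 < phs" "phs < pi / 2" "1 \<le> R"
  defines "c \<equiv> centre_distance phs R"
  shows "0 \<le> c" "c < R" "1 + 2 * c * cos phs + c\<^sup>2 = R\<^sup>2"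
proof -
  have cos_pos: "cos phs > 0" using assms by (intro cos_gt_zero) auto
  have R_sq: "(cos phs)\<^sup>2 \<le> R\<^sup>2 - (sin phs)\<^sup>2"
    using assms(3) one_le_power[of R 2] sin_cos_squared_add[of phs] by linarith
  then have "cos phs \<le> sqrt (R\<^sup>2 - (sin phs)\<^sup>2)"
    using cos_pos real_le_rsqrt by blast
  then show "0 \<le> c" by (simp add: c_def centre_distance_def)
  have "sqrt (R\<^sup>2 - (sin phs)\<^sup>2) \<le> sqrt (R\<^sup>2)" by (intro real_sqrt_le_mono) simp
  then show "c < R" using cos_pos assms(3) by (simp add: c_def centre_distance_def)
  have "(sqrt (R\<^sup>2 - (sin phs)\<^sup>2))\<^sup>2 = R\<^sup>2 - (sin phs)\<^sup>2"
    using R_sq by (intro real_sqrt_pow2) (smt (verit) zero_le_power2)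
  then show "1 + 2 * c * cos phs + c\<^sup>2 = R\<^sup>2"
    using sin_cos_squared_add[of phs] by (simp add: c_def centre_distance_def power2_eq_square algebra_simps)
qed

lemma unit_dist_O_R_sq:
  assumes "0 < phs" "phs < pi / 2" "1 \<le> R" "cmod z = 1"
  shows "(cmod (z - O_R phs R))\<^sup>2 = R\<^sup>2 + 2 * centre_distance phs R * (Re z - cos phs)"
proof -
  define c where "c = centre_distance phs R"
  have "(cmod (z - O_R phs R))\<^sup>2 = (Re z + c)\<^sup>2 + (Im z)\<^sup>2"
    by (simp add: O_R_eq c_def cmod_power2)
  also have "\<dots> = (cmod z)\<^sup>2 + 2 * c * Re z + c\<^sup>2"
    unfolding cmod_power2 by (simp add: power2_sum)
  also have "\<dots> = R\<^sup>2 + 2 * c * (Re z - cos phs)"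
    using centre_distance_properties(3)[OF assms(1-3)] assms(4) by (simp add: c_def right_diff_distrib)
  finally show ?thesis by (simp add: c_def)
qed

lemma cos_le_cos_iff_in_arc:
  assumes "0 \<le> b" "b \<le> pi" "0 \<le> a" "a < 2 * pi"
  shows "cos a \<le> cos b \<longleftrightarrow> b \<le> a \<and> a \<le> 2 * pi - b"
proof (cases "a \<le> pi")
  case True
  then have "cos a \<le> cos b \<longleftrightarrow> b \<le> a" using assms by (intro cos_mono_le_eq) auto
  moreover have "a \<le> 2 * pi - b" using assms True by linarith
  ultimately show ?thesis by blast
next
  case False
  have "cos (2 * pi - a) \<le> cos b \<longleftrightarrow> b \<le> 2 * pi - a" using assms False by (intro cos_mono_le_eq) auto
  moreover have "cos (2 * pi - a) = cos a" by (simp add: cos_diff)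
  ultimately have "cos a \<le> cos b \<longleftrightarrow> b \<le> 2 * pi - a" by simp
  moreover have "b \<le> a" using assms False by linarith
  ultimately show ?thesis by linarith
qed

lemma ang2pi_cis: assumes "0 \<le> p" "p < 2 * pi" shows "ang2pi (cis p) = p"
proof (cases "p \<le> pi")
  case True
  then show ?thesis using assms by (simp add: ang2pi_def Arg_cis)
next
  case False
  have "cis p = cis (p - 2 * pi)" by (simp add: complex_eq_iff cos_diff sin_diff)
  with False assms show ?thesis by (simp add: ang2pi_def Arg_cis)
qed

lemma cis_Arg_unit: "cmod z = 1 \<Longrightarrow> cis (Arg z) = z"
  using cis_Arg[of z] by (cases "z = 0") (auto simp: sgn_div_norm)

lemma cis_ang2pi:
  assumes "cmod z = 1" shows "cis (ang2pi z) = z"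
proof -
  have "cis (ang2pi z) = cis (Arg z)" unfolding ang2pi_def by (simp add: complex_eq_iff)
  then show ?thesis using assms by (simp add: cis_Arg_unit)
qed

lemma ang2pi_range:
  assumes "z \<noteq> 0" shows "0 \<le> ang2pi z" "ang2pi z < 2 * pi"
  using Arg_correct[OF assms] by (auto simp: ang2pi_def)

lemma Gamma_r_iff:
  assumes "0 < phs" "phs < pi / 2"
  shows "z \<in> Gamma_r phs \<longleftrightarrow> cmod z = 1 \<and> Re z \<le> cos phs"
proof (cases "cmod z = 1")
  case True
  have "z \<noteq> 0" using True by auto
  note range = ang2pi_range[OF this]
  have "Re z = cos (ang2pi z)" using arg_cong[OF cis_ang2pi[OF True], of Re] by simp
  then have "Re z \<le> cos phs \<longleftrightarrow> phs \<le> ang2pi z \<and> ang2pi z \<le> 2 * pi - phs"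
    using assms range cos_le_cos_iff_in_arc[of phs "ang2pi z"] by simp
  then show ?thesis using True by (simp add: Gamma_r_def)
qed (simp add: Gamma_r_def)

lemma Gamma_r_subset_Qset:
  assumes "0 < phs" "phs < pi / 2" "1 \<le> R"
  shows "Gamma_r phs \<subseteq> Qset phs R"
proof
  fix z assume "z \<in> Gamma_r phs"
  then have z: "cmod z = 1" "Re z \<le> cos phs" using Gamma_r_iff[OF assms(1,2)] by auto
  then have "(cmod (z - O_R phs R))\<^sup>2 \<le> R\<^sup>2"
    using unit_dist_O_R_sq[OF assms z(1)] centre_distance_properties(1)[OF assms]
    by (simp add: mult_nonneg_nonpos)
  then show "z \<in> Qset phs R" using z assms(3) by (simp add: Qset_def power2_le_iff_abs_le)
qed

lemma Qset_eq: "Qset phs R = cball 0 1 \<inter> cball (O_R phs R) R"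
  by (auto simp: Qset_def dist_norm norm_minus_commute)

lemma ray_exit_Qset:
  assumes "0 < phs" "phs < pi / 2" "1 \<le> R" "q \<in> Qset phs R" "v \<noteq> 0"
  defines "t \<equiv> Sup {t. 0 \<le> t \<and> q + complex_of_real t * v \<in> Qset phs R}"
  defines "z \<equiv> q + complex_of_real t * v"
  shows "0 \<le> t" "z \<in> Qset phs R" "z \<notin> Gamma_r phs \<Longrightarrow> cmod (z - O_R phs R) = R"
proof -
  note exit = ray_exit[of q 0 1 "O_R phs R" R v, folded Qset_eq, unfolded scaleR_conv_of_real, folded t_def z_def]
  show "0 \<le> t" "z \<in> Qset phs R" using exit assms(4,5) by auto
  assume "z \<notin> Gamma_r phs"
  show "cmod (z - O_R phs R) = R"
  proof (rule ccontr)
    assume "cmod (z - O_R phs R) \<noteq> R"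
    with exit assms(4,5) have "cmod z = 1" "cmod (z - O_R phs R) < R"
      by (auto simp: Qset_def dist_norm norm_minus_commute)
    then have "(cmod (z - O_R phs R))\<^sup>2 < R\<^sup>2" by (simp add: power_strict_mono)
    then have "centre_distance phs R * (Re z - cos phs) < 0"
      using unit_dist_O_R_sq[OF assms(1-3) \<open>cmod z = 1\<close>] by simp
    then have "Re z \<le> cos phs"
      using centre_distance_properties(1)[OF assms(1-3)] by (auto simp: mult_less_0_iff)
    with \<open>cmod z = 1\<close> \<open>z \<notin> Gamma_r phs\<close> show False using Gamma_r_iff[OF assms(1,2)] by simp
  qed
qed

definition outer_normal :: "bstate \<Rightarrow> complex" where
  "outer_normal y = cis (fst (snd y))"

lemma norm_vel: "cmod (vel y) = 1"
  by (simp add: vel_def norm_mult)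

lemma norm_outer_normal: "cmod (outer_normal y) = 1"
  by (simp add: outer_normal_def)

lemma sin_theta_eq: "sin (theta y) = - (vel y \<bullet> outer_normal y)"
proof -
  obtain s a th where y: "y = (s, a, th)" by (cases y) auto
  have "vel y * cnj (outer_normal y) = \<i> * cis th"
    by (simp add: y vel_def outer_normal_def cis_cnj mult.commute mult.left_commute cis_mult)
  then have "Re (vel y * cnj (outer_normal y)) = - sin th" by simp
  then have "vel y \<bullet> outer_normal y = - sin th" by (simp add: inner_complex_def)
  then show ?thesis by (simp add: y theta_def)
qed

lemma base_Sr: "fst y = Sr \<Longrightarrow> base phs R y = outer_normal y"
  by (cases y) (auto simp: base_def outer_normal_def)

lemma base_SR: "fst y = SR \<Longrightarrow> base phs R y = O_R phs R + complex_of_real R * outer_normal y"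
  by (cases y) (auto simp: base_def outer_normal_def)

lemma base_inner_outer_normal_pos_SR:
  assumes "0 < phs" "phs < pi / 2" "1 \<le> R" "fst y = SR"
  shows "base phs R y \<bullet> outer_normal y > 0"
proof -
  define c n where "c = centre_distance phs R" and "n = outer_normal y"
  have unit: "(Re n)\<^sup>2 + (Im n)\<^sup>2 = 1" using norm_outer_normal[of y] cmod_power2[of n] by (simp add: n_def)
  have base: "base phs R y = complex_of_real R * n - complex_of_real c"
    using base_SR[OF assms(4)] by (simp add: O_R_eq c_def n_def)
  have "base phs R y \<bullet> n = R * ((Re n)\<^sup>2 + (Im n)\<^sup>2) - c * Re n"
    unfolding base by (simp add: inner_complex_def power2_eq_square algebra_simps)
  then have "base phs R y \<bullet> n = R - c * Re n" by (simp only: unit mult_1_right)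
  moreover have "Re n \<le> 1" using abs_Re_le_cmod[of n] norm_outer_normal[of y] by (simp add: n_def)
  moreover have "0 \<le> c" "c < R" using centre_distance_properties[OF assms(1-3)] by (simp_all add: c_def)
  ultimately show ?thesis by (simp add: n_def) (smt (verit) mult_left_le)
qed

lemma Mr_D:
  assumes "0 < phs" "y \<in> Mr phs"
  shows "fst y = Sr" "base phs R y \<in> Gamma_r phs"
  using assms by (auto simp: Mr_def base_def Gamma_r_def ang2pi_cis)

lemma MR_D:
  assumes "y \<in> MR phs R"
  shows "fst y = SR" "sin (theta y) > 0"
  using assms by (auto simp: MR_def theta_def intro: sin_gt_zero)

lemma cis_Arg_rotated_quotient:
  assumes "cmod n = 1" "cmod w = 1"
  shows "\<i> * n * cis (Arg (w / (\<i> * n))) = w"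
proof -
  have "cmod (w / (\<i> * n)) = 1" using assms by (simp add: norm_divide norm_mult)
  then have "cis (Arg (w / (\<i> * n))) = w / (\<i> * n)" by (rule cis_Arg_unit)
  moreover have "n \<noteq> 0" using assms(1) by auto
  ultimately show ?thesis by simp
qed

lemma bmap_exit:
  assumes "0 < phs" "phs < pi / 2" "1 \<le> R" "base phs R x \<in> Qset phs R"
  defines "y \<equiv> bmap phs R x"
  obtains t where "0 \<le> t" "base phs R y = base phs R x + t *\<^sub>R vel x"
    "base phs R y \<in> Qset phs R" "fst y = Sr \<longleftrightarrow> base phs R y \<in> Gamma_r phs"
    "vel y = reflect (outer_normal y) (vel x)"
proof -
  define q v where "q = base phs R x" and "v = vel x"
  define t where "t = Sup {t. 0 \<le> t \<and> q + complex_of_real t * v \<in> Qset phs R}"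
  define z where "z = q + complex_of_real t * v"
  define n where "n = (z - O_R phs R) / complex_of_real R"
  have v: "cmod v = 1" by (simp add: v_def norm_vel)
  then have "v \<noteq> 0" by auto
  note exit = ray_exit_Qset[OF assms(1-4)[folded q_def] this, folded t_def z_def]
  have y: "y = (if z \<in> Gamma_r phs then (Sr, ang2pi z, Arg (reflect z v / (\<i> * z)))
               else (SR, Arg n, Arg (reflect n v / (\<i> * n))))"
    by (simp add: y_def bmap_def Let_def q_def v_def t_def z_def n_def reflect_def scaleR_conv_of_real)
  have "base phs R y = z \<and> (fst y = Sr \<longleftrightarrow> z \<in> Gamma_r phs) \<and> vel y = reflect (outer_normal y) v"
  proof (cases "z \<in> Gamma_r phs")
    case True
    then have "cmod z = 1" by (simp add: Gamma_r_def)
    with True y v show ?thesis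
      by (simp add: base_def outer_normal_def vel_def cis_ang2pi cis_Arg_rotated_quotient norm_reflect)
  next
    case False
    then have "cmod n = 1" using exit(3) assms(3) by (simp add: n_def norm_divide)
    moreover have "O_R phs R + complex_of_real R * n = z" using assms(3) by (simp add: n_def)
    ultimately show ?thesis using False y v
      by (simp add: base_def outer_normal_def vel_def cis_Arg_unit cis_Arg_rotated_quotient norm_reflect)
  qed
  then show thesis using that exit(1,2) by (simp add: z_def q_def v_def scaleR_conv_of_real)
qed

lemma Mr_MR_Mr_path_length_gt:
  assumes "0 < phs" "phs < pi / 2" "1 \<le> R"
    and "y0 \<in> Mr phs" "bmap phs R y0 \<in> MR phs R" "bmap phs R (bmap phs R y0) \<in> Mr phs"
  defines "y1 \<equiv> bmap phs R y0"
  defines "y2 \<equiv> bmap phs R y1"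
  defines "L \<equiv> cmod (base phs R y0 - base phs R y1) + cmod (base phs R y1 - base phs R y2)"
  shows "L > 2 * sin (theta y0)" "L > 2 * sin (theta y2)"
proof -
  let ?p = "base phs R" and ?v = vel
  define n where "n = outer_normal y1"
  have n: "cmod n = 1" by (simp add: n_def norm_outer_normal)
  have y0: "fst y0 = Sr" "?p y0 \<in> Gamma_r phs" using Mr_D assms(1,4) by auto
  have y1: "fst y1 = SR" "sin (theta y1) > 0" using MR_D assms(5) by (auto simp: y1_def)
  have y2: "fst y2 = Sr" "?p y2 \<in> Gamma_r phs" using Mr_D assms(1,6) by (auto simp: y2_def y1_def)
  obtain t where t: "0 \<le> t" "?p y1 = ?p y0 + t *\<^sub>R ?v y0" "?p y1 \<in> Qset phs R"
      "?p y1 \<notin> Gamma_r phs" "?v y1 = reflect n (?v y0)"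
    using bmap_exit[OF assms(1-3) subsetD[OF Gamma_r_subset_Qset[OF assms(1-3)] y0(2)]] y1(1)
    by (auto simp: y1_def n_def)
  obtain s where s: "0 \<le> s" "?p y2 = ?p y1 + s *\<^sub>R ?v y1" "?v y2 = reflect (outer_normal y2) (?v y1)"
    using bmap_exit[OF assms(1-3) t(3)] by (auto simp: y2_def)
  have "t \<noteq> 0" "s \<noteq> 0" using t s y0(2) y2(2) by auto
  with t(1) s(1) have "0 < t" "0 < s" by auto
  have L: "L = t + s" using t(1) s(1) by (simp add: L_def t(2) s(2) norm_vel)
  have unit: "cmod (?p y0) = 1" "cmod (?p y2) = 1" using y0(2) y2(2) by (simp_all add: Gamma_r_def)
  have vn: "?v y0 \<bullet> n > 0"
    using y1(2) sin_theta_eq[of y1] reflect_inner_normal[OF n] by (simp add: t(5) n_def)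
  have pn: "?p y1 \<bullet> n > 0"
    using base_inner_outer_normal_pos_SR[OF assms(1-3) y1(1)] by (simp add: n_def)
  have "t + s > - 2 * (?p y0 \<bullet> ?v y0)"
    by (rule return_path_length_gt[OF unit(1) norm_vel n \<open>0 \<le> t\<close> \<open>0 < s\<close> vn])
      (use pn unit(2) in \<open>simp_all flip: t(2,5) s(2)\<close>)
  then show "L > 2 * sin (theta y0)"
    using sin_theta_eq[of y0] base_Sr[OF y0(1)] by (simp add: L inner_commute)
  \<comment> \<open>the reversed path\<close>
  have "s + t > - 2 * (?p y2 \<bullet> - ?v y1)"
  proof (rule return_path_length_gt[OF unit(2) _ n \<open>0 \<le> s\<close> \<open>0 < t\<close>])
    show "cmod (- ?v y1) = 1" by (simp add: norm_vel)
    show "- ?v y1 \<bullet> n > 0" using vn reflect_inner_normal[OF n] by (simp add: t(5))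
    show "(?p y2 + s *\<^sub>R - ?v y1) \<bullet> n > 0" using pn by (simp add: s(2))
    show "cmod (?p y2 + s *\<^sub>R - ?v y1 + t *\<^sub>R reflect n (- ?v y1)) = 1"
      using unit(1) by (simp add: s(2) t(2,5) reflect_minus reflect_reflect[OF n])
  qed
  then show "L > 2 * sin (theta y2)"
    using sin_theta_eq[of y2] base_Sr[OF y2(1), of phs R] reflect_inner_normal[OF norm_outer_normal]
    by (simp add: L s(3) inner_commute)
qed

theorem mainTheorem8:
  fixes phs R :: real and x :: bstate
  defines "F \<equiv> bmap phs R"
  defines "n0 \<equiv> LEAST n. (F ^^ n) x \<in> Mr_out phs R"
  defines "x0 \<equiv> (F ^^ n0) x"
  defines "x1 \<equiv> F x0"
  defines "n1 \<equiv> LEAST n. (F ^^ n) x1 \<in> MR_out phs R"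
  defines "x2 \<equiv> (F ^^ (n1 + 1)) x1"
  defines "d0 \<equiv> 1 * sin (theta x0)"
  defines "d2 \<equiv> 1 * sin (theta x2)"
  defines "tau0 \<equiv> cmod (base phs R x0 - base phs R x1)"
  defines "tau1 \<equiv> cmod (base phs R x1 - base phs R x2)"
  assumes "0 < phs" and "phs < pi / 2" and "1 \<le> R"
    and "x \<in> Mr phs"
    and "\<exists>n. (F ^^ n) x \<in> Mr_out phs R"
    and "\<exists>n. (F ^^ n) x1 \<in> MR_out phs R"
    and "n1 = 0"
  shows "tau0 + tau1 > 2 * d0 \<and> tau0 + tau1 > 2 * d2 \<and> tau0 + tau1 > d0 + d2"
proof -
  have "x0 \<in> Mr_out phs R" unfolding x0_def n0_def by (rule LeastI_ex) (rule assms(15))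
  then have "x0 \<in> Mr phs" "F x0 \<in> MR phs R" by (simp_all add: Mr_out_def F_def)
  have "(F ^^ n1) x1 \<in> MR_out phs R" unfolding n1_def by (rule LeastI_ex) (rule assms(16))
  then have "F (F x0) \<in> Mr phs" using assms(17) by (simp add: MR_out_def x1_def F_def)
  have "x2 = F (F x0)" using assms(17) by (simp add: x2_def x1_def)
  then have "tau0 + tau1 > 2 * d0" "tau0 + tau1 > 2 * d2"
    using Mr_MR_Mr_path_length_gt[OF assms(11-13) \<open>x0 \<in> Mr phs\<close>]
      \<open>F x0 \<in> MR phs R\<close> \<open>F (F x0) \<in> Mr phs\<close>
    by (simp_all add: tau0_def tau1_def d0_def d2_def x1_def F_def)
  then show ?thesis by simp
qed

end
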